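(* Let $G$ be an $L$-bialgebra over $k$ with coproducts $\Delta,\tilde\Delta$. Equip $G\otimes G$ with the $G$-bimodule structure $a\cdot u=\Delta(a)u$, $u\cdot a=u\tilde\Delta(a)$, let $d=\Delta-\tilde\Delta$, and define $[x,y]_G=\Delta(x)\tilde\Delta(y)-\Delta(y)\tilde\Delta(x)\in G\otimes G$. Then for all $x,y,a,b\in G$: $[\cdot,\cdot]_G$ is bilinear; $[x,x]_G=0$; $[x,ya]_G=[x,y]_G\cdot a+y\cdot[x,a]_G-y\cdot(dx)\cdot a$; and $[xb,y]_G=[x,y]_G\cdot b+x\cdot[b,y]_G+x\cdot(dy)\cdot b$.
   Context: $k=\mathbb{R}$ or $\mathbb{C}$. An $L$-bialgebra is a unital associative algebra $G$ with linear maps $\Delta,\tilde\Delta:G\to G\otimes G$ that are unital algebra homomorphisms and satisfy $(\tilde{\Delta}\otimes id)\Delta=(id\otimes\Delta)\tilde{\Delta}$. Products in $G\otimes G$ are those of the tensor product algebra. *)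

theory Defs
  imports Complex_Main
begin

definition is_k_algebra :: "('k::field \<Rightarrow> 'a::ring_1 \<Rightarrow> 'a) \<Rightarrow> bool" where
  "is_k_algebra sc \<longleftrightarrow> vector_space sc \<and>
     (\<forall>c x y. sc c (x * y) = sc c x * y \<and> sc c (x * y) = x * sc c y)"

text \<open>tens : V \<times> W \<rightarrow> T exhibits T as the tensor product V \<otimes>_k W:
  tens is bilinear, its image spans T, and it sends products of linearly
  independent sets injectively to linearly independent sets (equivalently,
  products of bases form a basis of T; this is the universal property).\<close>
definition is_tensor_product ::
  "('k::field \<Rightarrow> 'v::ab_group_add \<Rightarrow> 'v) \<Rightarrow> ('k \<Rightarrow> 'w::ab_group_add \<Rightarrow> 'w) \<Rightarrow>
   ('k \<Rightarrow> 't::ab_group_add \<Rightarrow> 't) \<Rightarrow> ('v \<Rightarrow> 'w \<Rightarrow> 't) \<Rightarrow> bool" where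
  "is_tensor_product s1 s2 sT tens \<longleftrightarrow>
     vector_space s1 \<and> vector_space s2 \<and> vector_space sT \<and>
     (\<forall>x. Vector_Spaces.linear s2 sT (tens x)) \<and>
     (\<forall>y. Vector_Spaces.linear s1 sT (\<lambda>x. tens x y)) \<and>
     module.span sT (range (\<lambda>(x, y). tens x y)) = UNIV \<and>
     (\<forall>B C. \<not> module.dependent s1 B \<longrightarrow> \<not> module.dependent s2 C \<longrightarrow>
        inj_on (\<lambda>(b, c). tens b c) (B \<times> C) \<and>
        \<not> module.dependent sT ((\<lambda>(b, c). tens b c) ` (B \<times> C)))"

definition is_tensor_algebra ::
  "('k::field \<Rightarrow> 'g::ring_1 \<Rightarrow> 'g) \<Rightarrow> ('k \<Rightarrow> 't::ring_1 \<Rightarrow> 't) \<Rightarrow> ('g \<Rightarrow> 'g \<Rightarrow> 't) \<Rightarrow> bool" where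
  "is_tensor_algebra sG sT tens \<longleftrightarrow>
     is_k_algebra sG \<and> is_k_algebra sT \<and> is_tensor_product sG sG sT tens \<and>
     tens 1 1 = 1 \<and> (\<forall>a b c d. tens a b * tens c d = tens (a * c) (b * d))"

definition unital_alg_hom ::
  "('k::field \<Rightarrow> 'a::ring_1 \<Rightarrow> 'a) \<Rightarrow> ('k \<Rightarrow> 'b::ring_1 \<Rightarrow> 'b) \<Rightarrow> ('a \<Rightarrow> 'b) \<Rightarrow> bool" where
  "unital_alg_hom s1 s2 f \<longleftrightarrow> Vector_Spaces.linear s1 s2 f \<and> f 1 = 1 \<and>
     (\<forall>x y. f (x * y) = f x * f y)"

text \<open>L-bialgebra (G, \<Delta>, \<Delta>'), with T = G\<otimes>G (via tens) and T3 = (G\<otimes>G)\<otimes>G (via tens3).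
  m1 u z = u \<otimes> z for u in T; m2 x v is x \<otimes> v for v in T, transported to
  (G\<otimes>G)\<otimes>G by the associator x\<otimes>(y\<otimes>z) \<mapsto> (x\<otimes>y)\<otimes>z.  phi = \<Delta>'\<otimes>id and psi = id\<otimes>\<Delta>
  as linear maps T \<rightarrow> T3 (all these maps are uniquely determined by the stated
  equations, since pure tensors span).\<close>
definition L_bialgebra ::
  "('k::field \<Rightarrow> 'g::ring_1 \<Rightarrow> 'g) \<Rightarrow> ('k \<Rightarrow> 't::ring_1 \<Rightarrow> 't) \<Rightarrow> ('g \<Rightarrow> 'g \<Rightarrow> 't) \<Rightarrow>
   ('k \<Rightarrow> 't3::ab_group_add \<Rightarrow> 't3) \<Rightarrow> ('t \<Rightarrow> 'g \<Rightarrow> 't3) \<Rightarrow>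
   ('g \<Rightarrow> 't) \<Rightarrow> ('g \<Rightarrow> 't) \<Rightarrow> bool" where
  "L_bialgebra sG sT tens s3 tens3 \<Delta> \<Delta>' \<longleftrightarrow>
     is_tensor_algebra sG sT tens \<and> is_tensor_product sT sG s3 tens3 \<and>
     unital_alg_hom sG sT \<Delta> \<and> unital_alg_hom sG sT \<Delta>' \<and>
     (\<exists>m2 phi psi.
        (\<forall>x. Vector_Spaces.linear sT s3 (m2 x)) \<and>
        (\<forall>x y z. m2 x (tens y z) = tens3 (tens x y) z) \<and>
        Vector_Spaces.linear sT s3 phi \<and> Vector_Spaces.linear sT s3 psi \<and>
        (\<forall>a b. phi (tens a b) = tens3 (\<Delta>' a) b) \<and>
        (\<forall>a b. psi (tens a b) = m2 a (\<Delta> b)) \<and>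
        (\<forall>g. phi (\<Delta> g) = psi (\<Delta>' g)))"

definition lact :: "('g \<Rightarrow> 't::ring_1) \<Rightarrow> 'g \<Rightarrow> 't \<Rightarrow> 't" where
  "lact \<Delta> a u = \<Delta> a * u"

definition ract :: "('g \<Rightarrow> 't::ring_1) \<Rightarrow> 't \<Rightarrow> 'g \<Rightarrow> 't" where
  "ract \<Delta>' u a = u * \<Delta>' a"

definition dmap :: "('g \<Rightarrow> 't::ring_1) \<Rightarrow> ('g \<Rightarrow> 't) \<Rightarrow> 'g \<Rightarrow> 't" where
  "dmap \<Delta> \<Delta>' x = \<Delta> x - \<Delta>' x"

definition Gbr :: "('g \<Rightarrow> 't::ring_1) \<Rightarrow> ('g \<Rightarrow> 't) \<Rightarrow> 'g \<Rightarrow> 'g \<Rightarrow> 't" where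
  "Gbr \<Delta> \<Delta>' x y = \<Delta> x * \<Delta>' y - \<Delta> y * \<Delta>' x"

end

theory Submission
  imports Defs
begin

text \<open>Bilinearity and the alternating property only use that \<Delta> and \<Delta>' are linear maps into
  an algebra; the two Leibniz-type rules are ring identities that follow from the
  multiplicativity of \<Delta> and \<Delta>' alone.\<close>

lemma k_algebra_scale_mult_left: "is_k_algebra sc \<Longrightarrow> sc a (u * v) = sc a u * v"
  and k_algebra_scale_mult_right: "is_k_algebra sc \<Longrightarrow> sc a (u * v) = u * sc a v"
  unfolding is_k_algebra_def by blast+

lemma linear_mult_const_right:
  assumes "is_k_algebra sT" and "Vector_Spaces.linear sG sT f"
  shows "Vector_Spaces.linear sG sT (\<lambda>x. f x * c)"
  using assms(2) unfolding Vector_Spaces.linear_iff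
  by (simp add: distrib_right k_algebra_scale_mult_left[OF assms(1)])

lemma linear_mult_const_left:
  assumes "is_k_algebra sT" and "Vector_Spaces.linear sG sT f"
  shows "Vector_Spaces.linear sG sT (\<lambda>x. c * f x)"
  using assms(2) unfolding Vector_Spaces.linear_iff
  by (simp add: distrib_left k_algebra_scale_mult_right[OF assms(1)])

lemma linear_diff_fun:
  assumes "Vector_Spaces.linear s1 s2 f" and "Vector_Spaces.linear s1 s2 g"
  shows "Vector_Spaces.linear s1 s2 (\<lambda>x. f x - g x)"
proof -
  interpret vector_space_pair s1 s2
    using assms(1) unfolding Vector_Spaces.linear_iff vector_space_pair_def by blast
  show ?thesis
    using assms by (rule linear_compose_sub)
qed

lemma Gbr_linear_left:
  assumes "is_k_algebra sT"
    and "Vector_Spaces.linear sG sT \<Delta>" and "Vector_Spaces.linear sG sT \<Delta>'"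
  shows "Vector_Spaces.linear sG sT (\<lambda>x. Gbr \<Delta> \<Delta>' x y)"
  unfolding Gbr_def
  by (intro linear_diff_fun linear_mult_const_right linear_mult_const_left assms)

lemma Gbr_linear_right:
  assumes "is_k_algebra sT"
    and "Vector_Spaces.linear sG sT \<Delta>" and "Vector_Spaces.linear sG sT \<Delta>'"
  shows "Vector_Spaces.linear sG sT (\<lambda>y. Gbr \<Delta> \<Delta>' x y)"
  unfolding Gbr_def
  by (intro linear_diff_fun linear_mult_const_right linear_mult_const_left assms)

lemma Gbr_self: "Gbr \<Delta> \<Delta>' x x = 0"
  unfolding Gbr_def by simp

lemma Gbr_mult_right:
  assumes "\<And>u v. \<Delta> (u * v) = \<Delta> u * \<Delta> v" and "\<And>u v. \<Delta>' (u * v) = \<Delta>' u * \<Delta>' v"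
  shows "Gbr \<Delta> \<Delta>' x (y * a) =
    ract \<Delta>' (Gbr \<Delta> \<Delta>' x y) a + lact \<Delta> y (Gbr \<Delta> \<Delta>' x a) - ract \<Delta>' (lact \<Delta> y (dmap \<Delta> \<Delta>' x)) a"
  unfolding Gbr_def ract_def lact_def dmap_def assms by (simp add: algebra_simps)

lemma Gbr_mult_left:
  assumes "\<And>u v. \<Delta> (u * v) = \<Delta> u * \<Delta> v" and "\<And>u v. \<Delta>' (u * v) = \<Delta>' u * \<Delta>' v"
  shows "Gbr \<Delta> \<Delta>' (x * b) y =
    ract \<Delta>' (Gbr \<Delta> \<Delta>' x y) b + lact \<Delta> x (Gbr \<Delta> \<Delta>' b y) + ract \<Delta>' (lact \<Delta> x (dmap \<Delta> \<Delta>' y)) b"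
  unfolding Gbr_def ract_def lact_def dmap_def assms by (simp add: algebra_simps)

theorem mainTheorem13:
  fixes sG :: "'k::field \<Rightarrow> 'g::ring_1 \<Rightarrow> 'g"
    and sT :: "'k \<Rightarrow> 't::ring_1 \<Rightarrow> 't"
    and tens :: "'g \<Rightarrow> 'g \<Rightarrow> 't"
    and s3 :: "'k \<Rightarrow> 't3::ab_group_add \<Rightarrow> 't3"
    and tens3 :: "'t \<Rightarrow> 'g \<Rightarrow> 't3"
    and \<Delta> \<Delta>' :: "'g \<Rightarrow> 't"
  assumes "L_bialgebra sG sT tens s3 tens3 \<Delta> \<Delta>'"
  shows "(\<forall>y. Vector_Spaces.linear sG sT (\<lambda>x. Gbr \<Delta> \<Delta>' x y)) \<and>
         (\<forall>x. Vector_Spaces.linear sG sT (\<lambda>y. Gbr \<Delta> \<Delta>' x y)) \<and>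
         (\<forall>x. Gbr \<Delta> \<Delta>' x x = 0) \<and>
         (\<forall>x y a. Gbr \<Delta> \<Delta>' x (y * a) =
             ract \<Delta>' (Gbr \<Delta> \<Delta>' x y) a + lact \<Delta> y (Gbr \<Delta> \<Delta>' x a)
             - ract \<Delta>' (lact \<Delta> y (dmap \<Delta> \<Delta>' x)) a) \<and>
         (\<forall>x y b. Gbr \<Delta> \<Delta>' (x * b) y =
             ract \<Delta>' (Gbr \<Delta> \<Delta>' x y) b + lact \<Delta> x (Gbr \<Delta> \<Delta>' b y)
             + ract \<Delta>' (lact \<Delta> x (dmap \<Delta> \<Delta>' y)) b)"
proof -
  have T: "is_k_algebra sT"
    using assms unfolding L_bialgebra_def is_tensor_algebra_def by blast
  have "unital_alg_hom sG sT \<Delta>" "unital_alg_hom sG sT \<Delta>'"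
    using assms unfolding L_bialgebra_def by blast+
  then have lin: "Vector_Spaces.linear sG sT \<Delta>" "Vector_Spaces.linear sG sT \<Delta>'"
    and mult: "\<And>u v. \<Delta> (u * v) = \<Delta> u * \<Delta> v" "\<And>u v. \<Delta>' (u * v) = \<Delta>' u * \<Delta>' v"
    unfolding unital_alg_hom_def by blast+
  show ?thesis
    by (simp add: Gbr_linear_left[OF T lin] Gbr_linear_right[OF T lin] Gbr_self
        Gbr_mult_right[of \<Delta> \<Delta>', OF mult] Gbr_mult_left[of \<Delta> \<Delta>', OF mult])
qed

end
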